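(* Assume $n^{2/3}$ is an integer. Consider Algorithm ProxSVRG (described in the context) with $b=n^{2/3}$, $\eta=1/(3L)$, $m=\lfloor n^{1/3}\rfloor$, and $T$ a multiple of $m$. Then the output $x_a$ satisfies $$\mathbb E\big[\|\mathcal G_\eta(x_a)\|^2\big]\le \frac{18L\,(F(x^0)-F(x^* ))}{T},$$ where $x^*$ is an optimal solution of $\min_x F(x)$.
   Context: Setting: Let $n,d\ge 1$ be integers and $[n]=\{1,\dots,n\}$. Let $f_1,\dots,f_n:\mathbb R^d\to\mathbb R$ be differentiable (possibly nonconvex) functions, each $L$-smooth for some $L>0$, i.e. $\|\nabla f_i(x)-\nabla f_i(y)\|\le L\|x-y\|$ for all $x,y\in\mathbb R^d$ and $i\in[n]$. Let $f=\frac1n\sum_{i=1}^n f_i$. Let $h:\mathbb R^d\to\mathbb R\cup\{+\infty\}$ be proper, lower semicontinuous and convex, with closed domain. Let $F=f+h$, and let $x^*$ be a global minimizer of $F$ on $\mathbb R^d$ (assumed to exist). For $\eta>0$, $\mathrm{prox}_{\eta h}(x):=\arg\min_{y\in\mathbb R^d}\big(h(y)+\frac1{2\eta}\|y-x\|^2\big)$, and the gradient mapping is $\mathcal G_\eta(x):=\frac1\eta\big[x-\mathrm{prox}_{\eta h}(x-\eta\nabla f(x))\big]$. Algorithm ProxSVRG$(x^0,T,m,b,\eta)$: Given $x^0\in\mathbb R^d$, positive integers $T,m,b$ and $\eta>0$, let $S=\lceil T/m\rceil$ and set $\tilde x^0=x^0_m=x^0$. For $s=0,\dots,S-1$: set $x^{s+1}_0=x^s_m$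 and $g^{s+1}=\frac1n\sum_{i=1}^n\nabla f_i(\tilde x^s)$; for $t=0,\dots,m-1$: draw a multiset $I_t$ of $b$ indices, each drawn independently and uniformly at random from $[n]$ (with replacement, independently of all previous draws), set $v^{s+1}_t=\frac1b\sum_{i\in I_t}\big(\nabla f_i(x^{s+1}_t)-\nabla f_i(\tilde x^s)\big)+g^{s+1}$ and $x^{s+1}_{t+1}=\mathrm{prox}_{\eta h}(x^{s+1}_t-\eta v^{s+1}_t)$; after the inner loop set $\tilde x^{s+1}=x^{s+1}_m$. The output $x_a$ is chosen uniformly at random from $\{x^{s+1}_t: 0\le t\le m-1,\ 0\le s\le S-1\}$. Expectations are over all randomness of the algorithm. *)

theory Defs
  imports "HOL-Analysis.Analysis" "HOL-Probability.Probability"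
begin

text \<open>The extended-valued function h : R^d -> R \<union> {+\<infinity>} is represented by its
  effective domain D (a set) together with its finite values h on D; h is +\<infinity> off D.\<close>

definition lsc_ext :: "'a::topological_space set \<Rightarrow> ('a \<Rightarrow> real) \<Rightarrow> bool" where
  "lsc_ext D h \<longleftrightarrow> (\<forall>c::real. closed {x\<in>D. h x \<le> c})"

definition F_ext :: "'a set \<Rightarrow> ('a \<Rightarrow> real) \<Rightarrow> ('a \<Rightarrow> real) \<Rightarrow> 'a \<Rightarrow> ereal" where
  "F_ext D f h x = (if x \<in> D then ereal (f x + h x) else \<infinity>)"

definition prox :: "real \<Rightarrow> 'a::real_normed_vector set \<Rightarrow> ('a \<Rightarrow> real) \<Rightarrow> 'a \<Rightarrow> 'a" where
  "prox \<eta> D h x = (SOME y. y \<in> D \<and>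
      (\<forall>z\<in>D. h y + (norm (y - x))\<^sup>2 / (2 * \<eta>) \<le> h z + (norm (z - x))\<^sup>2 / (2 * \<eta>)))"

definition full_grad :: "nat \<Rightarrow> (nat \<Rightarrow> 'a \<Rightarrow> 'a::real_vector) \<Rightarrow> 'a \<Rightarrow> 'a" where
  "full_grad n gf x = (1 / real n) *\<^sub>R (\<Sum>i<n. gf i x)"

definition grad_map :: "real \<Rightarrow> 'a::real_normed_vector set \<Rightarrow> ('a \<Rightarrow> real) \<Rightarrow> nat \<Rightarrow>
    (nat \<Rightarrow> 'a \<Rightarrow> 'a) \<Rightarrow> 'a \<Rightarrow> 'a" where
  "grad_map \<eta> D h n gf x = (1 / \<eta>) *\<^sub>R (x - prox \<eta> D h (x - \<eta> *\<^sub>R full_grad n gf x))"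

text \<open>A multiset of b indices drawn independently and uniformly from {0..<n} with replacement:
  uniform distribution on the length-b lists over {0..<n}.\<close>
definition draw_indices :: "nat \<Rightarrow> nat \<Rightarrow> nat list pmf" where
  "draw_indices n b = pmf_of_set {I. set I \<subseteq> {..<n} \<and> length I = b}"

definition svrg_step :: "nat \<Rightarrow> nat \<Rightarrow> real \<Rightarrow> 'a::real_normed_vector set \<Rightarrow> ('a \<Rightarrow> real) \<Rightarrow>
    (nat \<Rightarrow> 'a \<Rightarrow> 'a) \<Rightarrow> 'a \<Rightarrow> 'a \<Rightarrow> 'a \<Rightarrow> 'a pmf" where
  "svrg_step n b \<eta> D h gf xt g x =
     map_pmf (\<lambda>I. let v = (1 / real b) *\<^sub>R (\<Sum>i\<leftarrow>I. gf i x - gf i xt) + g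
                  in prox \<eta> D h (x - \<eta> *\<^sub>R v)) (draw_indices n b)"

fun svrg_inner :: "nat \<Rightarrow> nat \<Rightarrow> real \<Rightarrow> 'a::real_normed_vector set \<Rightarrow> ('a \<Rightarrow> real) \<Rightarrow>
    (nat \<Rightarrow> 'a \<Rightarrow> 'a) \<Rightarrow> 'a \<Rightarrow> 'a \<Rightarrow> nat \<Rightarrow> 'a \<Rightarrow> 'a list pmf" where
  "svrg_inner n b \<eta> D h gf xt g 0 x = return_pmf [x]"
| "svrg_inner n b \<eta> D h gf xt g (Suc k) x =
     bind_pmf (svrg_step n b \<eta> D h gf xt g x) (\<lambda>y.
     map_pmf (\<lambda>ys. x # ys) (svrg_inner n b \<eta> D h gf xt g k y))"

text \<open>Outer loop: S epochs of m inner steps starting from snapshot x (= x^s_m = x^{s+1}_0).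
  Returns the list of all x^{s+1}_t with 0 \<le> t \<le> m-1, epoch by epoch.\<close>
fun svrg_outer :: "nat \<Rightarrow> nat \<Rightarrow> real \<Rightarrow> 'a::real_normed_vector set \<Rightarrow> ('a \<Rightarrow> real) \<Rightarrow>
    (nat \<Rightarrow> 'a \<Rightarrow> 'a) \<Rightarrow> nat \<Rightarrow> nat \<Rightarrow> 'a \<Rightarrow> 'a list pmf" where
  "svrg_outer n b \<eta> D h gf m 0 x = return_pmf []"
| "svrg_outer n b \<eta> D h gf m (Suc S) x =
     bind_pmf (svrg_inner n b \<eta> D h gf x (full_grad n gf x) m x) (\<lambda>xs.
     map_pmf (\<lambda>rest. butlast xs @ rest) (svrg_outer n b \<eta> D h gf m S (last xs)))"

definition prox_svrg :: "nat \<Rightarrow> 'a::real_normed_vector set \<Rightarrow> ('a \<Rightarrow> real) \<Rightarrow>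
    (nat \<Rightarrow> 'a \<Rightarrow> 'a) \<Rightarrow> 'a \<Rightarrow> nat \<Rightarrow> nat \<Rightarrow> nat \<Rightarrow> real \<Rightarrow> 'a pmf" where
  "prox_svrg n D h gf x0 T m b \<eta> =
     (let S = nat \<lceil>real T / real m\<rceil> in
      bind_pmf (svrg_outer n b \<eta> D h gf m S x0) (\<lambda>xs.
      map_pmf (\<lambda>j. xs ! j) (pmf_of_set {..<S * m})))"

end

theory Submission
  imports Defs
begin

text \<open>Each inner step of ProxSVRG decreases, in expectation, the Lyapunov function
  \<open>F x + c\<^sub>t \<parallel>x - s\<parallel>\<^sup>2\<close> (\<open>s\<close> the snapshot of the epoch) by \<open>\<parallel>\<G>\<^sub>\<eta> x\<parallel>\<^sup>2 / (18 L)\<close>. The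
  three-point property of the proximal map and the descent lemma give a deterministic one-step
  bound with error \<open>\<parallel>\<nabla>f x - v\<parallel>\<^sup>2\<close>; the minibatch variance bounds this error by
  \<open>L\<^sup>2 \<parallel>x - s\<parallel>\<^sup>2 / b\<close>, and the weights \<open>c\<^sub>t\<close> (with \<open>c\<^sub>m = 0\<close>, growing at most like
  \<open>(1 + 1/m)\<^sup>m \<le> e\<close>) absorb it because \<open>m\<^sup>2 \<le> b\<close>. Telescoping over all \<open>T\<close> steps and averaging
  over the uniformly chosen output gives the bound.\<close>



section \<open>Existence of proximal points\<close>

lemma lsc_ext_attains_min:
  fixes \<phi> :: "'a::topological_space \<Rightarrow> real"
  assumes lsc: "lsc_ext D \<phi>" and C: "compact C" and ne: "D \<inter> C \<noteq> {}"
  shows "\<exists>y\<in>D \<inter> C. \<forall>z\<in>D \<inter> C. \<phi> y \<le> \<phi> z"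
proof -
  have "C \<inter> (\<Inter>z\<in>D \<inter> C. {x\<in>D. \<phi> x \<le> \<phi> z}) \<noteq> {}"
  proof (rule compact_imp_fip_image[OF C])
    show "closed {x\<in>D. \<phi> x \<le> \<phi> z}" for z
      using lsc by (simp add: lsc_ext_def)
    fix Z assume Z: "finite Z" "Z \<subseteq> D \<inter> C"
    show "C \<inter> (\<Inter>z\<in>Z. {x\<in>D. \<phi> x \<le> \<phi> z}) \<noteq> {}"
    proof (cases "Z = {}")
      case True
      then show ?thesis using ne by auto
    next
      case False
      then have "Min (\<phi> ` Z) \<in> \<phi> ` Z" using Z(1) by simp
      then obtain y where "y \<in> Z" "\<phi> y = Min (\<phi> ` Z)" by auto
      then have "y \<in> C \<inter> (\<Inter>z\<in>Z. {x\<in>D. \<phi> x \<le> \<phi> z})" using Z by auto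
      then show ?thesis by blast
    qed
  qed
  then obtain y where "y \<in> C" "\<And>z. z \<in> D \<inter> C \<Longrightarrow> y \<in> D \<and> \<phi> y \<le> \<phi> z" by blast
  then show ?thesis using ne by blast
qed

lemma lsc_ext_add_continuous:
  fixes h q :: "'a::metric_space \<Rightarrow> real"
  assumes lsc: "lsc_ext D h" and q: "continuous_on UNIV q"
  shows "lsc_ext D (\<lambda>x. h x + q x)"
  unfolding lsc_ext_def closed_sequential_limits
proof (intro allI impI, elim conjE)
  fix c s l assume s: "\<forall>k. s k \<in> {x\<in>D. h x + q x \<le> c}" and lim: "s \<longlonglongrightarrow> l"
  have ql: "(\<lambda>k. q (s k)) \<longlonglongrightarrow> q l"
    using q lim by (simp add: continuous_on_eq_continuous_at isCont_tendsto_compose)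
  have l: "l \<in> {x\<in>D. h x \<le> c - q l + e}" if "e > 0" for e
  proof (rule Lim_in_closed_set[OF _ _ sequentially_bot lim])
    show "closed {x\<in>D. h x \<le> c - q l + e}" using lsc by (simp add: lsc_ext_def)
    have "\<forall>\<^sub>F k in sequentially. q l - e < q (s k)"
      using ql by (rule order_tendstoD) (use that in simp)
    then show "\<forall>\<^sub>F k in sequentially. s k \<in> {x\<in>D. h x \<le> c - q l + e}"
    proof eventually_elim
      case (elim k)
      then show ?case using s[rule_format, of k] by auto
    qed
  qed
  have "h l \<le> c - q l"
    by (rule field_le_epsilon) (use l in blast)
  then show "l \<in> {x\<in>D. h x + q x \<le> c}" using l[of 1] by simp
qed

lemma convex_lsc_ext_lower_bound:
  fixes h :: "'a::euclidean_space \<Rightarrow> real"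
  assumes D: "convex D" "y0 \<in> D" and hc: "convex_on D h" and lsc: "lsc_ext D h"
  obtains M \<beta> where "\<And>y. y \<in> D \<Longrightarrow> M - \<beta> * norm (y - y0) \<le> h y" "\<beta> \<ge> 0"
proof -
  have "D \<inter> cball y0 1 \<noteq> {}" using D(2) by force
  then obtain y1 where y1: "y1 \<in> D \<inter> cball y0 1" "\<And>z. z \<in> D \<inter> cball y0 1 \<Longrightarrow> h y1 \<le> h z"
    using lsc_ext_attains_min[OF lsc compact_cball] by blast
  have y1_y0: "h y1 \<le> h y0" using y1 D(2) by simp
  have "h y \<ge> h y1 - (h y0 - h y1) * norm (y - y0)" if y: "y \<in> D" for y
  proof (cases "norm (y - y0) \<le> 1")
    case True
    then have "h y1 \<le> h y" using y y1 by (simp add: dist_norm norm_minus_commute)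
    moreover have "0 \<le> (h y0 - h y1) * norm (y - y0)" using y1_y0 by simp
    ultimately show ?thesis by linarith
  next
    case False
    define r where "r = norm (y - y0)"
    have r1: "r > 1" using False r_def by simp
    define z where "z = (1 - 1/r) *\<^sub>R y0 + (1/r) *\<^sub>R y"
    have "z \<in> D" unfolding z_def using D y r1 by (intro convexD) auto
    moreover have "norm (z - y0) = 1"
    proof -
      have "z - y0 = (1/r) *\<^sub>R (y - y0)" by (simp add: z_def algebra_simps)
      then show ?thesis using r1 by (auto simp: r_def)
    qed
    ultimately have "h y1 \<le> h z" using y1 by (simp add: dist_norm norm_minus_commute)
    also have "h z \<le> (1 - 1/r) * h y0 + (1/r) * h y"
      unfolding z_def using convex_onD[OF hc, of "1/r" y0 y] r1 D(2) y by auto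
    finally have "r * h y1 \<le> r * ((1 - 1/r) * h y0 + (1/r) * h y)" using r1 by simp
    also have "\<dots> = (r - 1) * h y0 + h y" using r1 by (simp add: algebra_simps)
    finally show ?thesis unfolding r_def[symmetric] using y1_y0 by (simp add: algebra_simps)
  qed
  with y1_y0 show ?thesis by (intro that[of "h y1" "h y0 - h y1"]) auto
qed

lemma prox_objective_attains_min:
  fixes h :: "'a::euclidean_space \<Rightarrow> real"
  assumes D: "convex D" "D \<noteq> {}" and hc: "convex_on D h" and lsc: "lsc_ext D h"
    and \<eta>: "\<eta> > 0"
  shows "\<exists>y. y \<in> D \<and> (\<forall>z\<in>D. h y + (norm (y - w))\<^sup>2 / (2 * \<eta>) \<le> h z + (norm (z - w))\<^sup>2 / (2 * \<eta>))"
proof -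
  define \<phi> where "\<phi> z = h z + (norm (z - w))\<^sup>2 / (2 * \<eta>)" for z
  obtain y0 where y0: "y0 \<in> D" using D(2) by blast
  obtain M \<beta> where hM: "\<And>y. y \<in> D \<Longrightarrow> M - \<beta> * norm (y - y0) \<le> h y" and \<beta>: "\<beta> \<ge> 0"
    using convex_lsc_ext_lower_bound[OF D(1) y0 hc lsc] by metis
  define a where "a = norm (y0 - w)"
  define R where "R = a + 2 * \<eta> * (\<beta> + 1) + \<bar>\<phi> y0 - M\<bar> + \<beta> * a + 1"
  have R: "R \<ge> 0" using \<eta> \<beta> by (simp add: R_def a_def)
  \<comment> \<open>coercivity: the quadratic term outgrows the linear lower bound of \<open>h\<close>\<close>
  have far: "\<phi> y0 < \<phi> z" if z: "z \<in> D" "R < norm (z - y0)" for z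
  proof -
    define r where "r = norm (z - y0)"
    have pos: "0 \<le> \<beta> * a" "0 \<le> 2 * \<eta> * (\<beta> + 1)" using \<beta> \<eta> by (simp_all add: a_def)
    have ra: "2 * \<eta> * (\<beta> + 1) \<le> r - a"
      using z(2) pos unfolding r_def R_def by linarith
    have ra0: "0 \<le> r - a" using ra pos by linarith
    have "r - a \<le> norm (z - w)"
      unfolding r_def a_def using norm_triangle_ineq4[of "z - w" "y0 - w"] by simp
    then have "(r - a)\<^sup>2 \<le> (norm (z - w))\<^sup>2" using ra0 by (intro power_mono)
    moreover have "(r - a) * (2 * \<eta> * (\<beta> + 1)) \<le> (r - a)\<^sup>2"
      unfolding power2_eq_square using ra ra0 by (intro mult_left_mono)
    ultimately have "(r - a) * (2 * \<eta> * (\<beta> + 1)) \<le> (norm (z - w))\<^sup>2" by linarith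
    then have "(r - a) * (\<beta> + 1) \<le> (norm (z - w))\<^sup>2 / (2 * \<eta>)"
      using \<eta> by (simp add: pos_le_divide_eq ac_simps)
    then have "M - \<beta> * r + (r - a) * (\<beta> + 1) \<le> \<phi> z"
      unfolding \<phi>_def using hM[OF z(1), folded r_def] by linarith
    moreover have "\<phi> y0 - M + \<beta> * a + a < r"
      using z(2) pos abs_ge_self[of "\<phi> y0 - M"] unfolding R_def r_def by linarith
    ultimately show ?thesis by (simp add: algebra_simps)
  qed
  have "lsc_ext D \<phi>"
    unfolding \<phi>_def by (rule lsc_ext_add_continuous[OF lsc]) (use \<eta> in \<open>intro continuous_intros, auto\<close>)
  moreover have "D \<inter> cball y0 R \<noteq> {}" using y0 R by force
  ultimately obtain y where y: "y \<in> D \<inter> cball y0 R" "\<And>z. z \<in> D \<inter> cball y0 R \<Longrightarrow> \<phi> y \<le> \<phi> z"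
    using lsc_ext_attains_min[OF _ compact_cball] by blast
  have "\<phi> y \<le> \<phi> z" if z: "z \<in> D" for z
  proof (cases "norm (z - y0) \<le> R")
    case True
    then show ?thesis using y z by (simp add: dist_norm norm_minus_commute)
  next
    case False
    then have "\<phi> y0 < \<phi> z" using far z by simp
    moreover have "\<phi> y \<le> \<phi> y0" using y y0 R by simp
    ultimately show ?thesis by simp
  qed
  then show ?thesis using y(1) unfolding \<phi>_def by blast
qed

lemma
  fixes h :: "'a::euclidean_space \<Rightarrow> real"
  assumes "convex D" "D \<noteq> {}" "convex_on D h" "lsc_ext D h" "\<eta> > 0"
  shows prox_in_domain: "prox \<eta> D h w \<in> D"
    and prox_minimal: "z \<in> D \<Longrightarrow> h (prox \<eta> D h w) + (norm (prox \<eta> D h w - w))\<^sup>2 / (2 * \<eta>)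
                                   \<le> h z + (norm (z - w))\<^sup>2 / (2 * \<eta>)"
  using someI_ex[OF prox_objective_attains_min[OF assms]] unfolding prox_def by blast+


section \<open>One proximal gradient step\<close>

lemma power2_norm_add:
  fixes x y :: "'a::real_inner"
  shows "(norm (x + y))\<^sup>2 = (norm x)\<^sup>2 + 2 * (x \<bullet> y) + (norm y)\<^sup>2"
  by (simp add: power2_norm_eq_inner inner_add inner_commute)

lemma power2_norm_diff:
  fixes x y :: "'a::real_inner"
  shows "(norm (x - y))\<^sup>2 = (norm x)\<^sup>2 - 2 * (x \<bullet> y) + (norm y)\<^sup>2"
  by (simp add: power2_norm_eq_inner inner_diff inner_commute)

lemma power2_norm_add_le_weighted:
  fixes x y :: "'a::real_inner"
  assumes t: "t > 0"
  shows "(norm (x + y))\<^sup>2 \<le> (1 + t) * (norm x)\<^sup>2 + (1 + 1 / t) * (norm y)\<^sup>2"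
proof -
  have "0 \<le> (norm (t *\<^sub>R x - y))\<^sup>2 / t" using t by simp
  also have "\<dots> = (t\<^sup>2 * (norm x)\<^sup>2 - 2 * t * (x \<bullet> y) + (norm y)\<^sup>2) / t"
    by (simp add: power2_norm_diff power_mult_distrib)
  also have "\<dots> = t * (norm x)\<^sup>2 - 2 * (x \<bullet> y) + (norm y)\<^sup>2 / t"
    using t by (simp add: field_simps power2_eq_square)
  finally show ?thesis by (simp add: power2_norm_add algebra_simps)
qed

lemma prox_three_point:
  fixes y z w :: "'a::real_inner"
  assumes D: "convex D" and hc: "convex_on D h" and y: "y \<in> D" and z: "z \<in> D" and \<eta>: "\<eta> > 0"
    and min: "\<And>u. u \<in> D \<Longrightarrow> h y + (norm (y - w))\<^sup>2 / (2 * \<eta>) \<le> h u + (norm (u - w))\<^sup>2 / (2 * \<eta>)"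
  shows "2 * \<eta> * h y + (norm (y - w))\<^sup>2 + (norm (y - z))\<^sup>2 \<le> 2 * \<eta> * h z + (norm (z - w))\<^sup>2"
proof -
  define A where "A = 2 * \<eta> * (h y - h z) - 2 * ((y - w) \<bullet> (z - y))"
  define C where "C = (norm (z - y))\<^sup>2"
  have segment: "A \<le> t * C" if t: "0 < t" "t \<le> 1" for t
  proof -
    define u where "u = (1 - t) *\<^sub>R y + t *\<^sub>R z"
    have "u \<in> D" unfolding u_def using D y z t by (intro convexD) auto
    then have "2 * \<eta> * (h y + (norm (y - w))\<^sup>2 / (2 * \<eta>))
               \<le> 2 * \<eta> * (h u + (norm (u - w))\<^sup>2 / (2 * \<eta>))"
      using min \<eta> by (intro mult_left_mono) auto
    then have "2 * \<eta> * h y + (norm (y - w))\<^sup>2 \<le> 2 * \<eta> * h u + (norm (u - w))\<^sup>2"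
      using \<eta> by (simp add: distrib_left)
    moreover have "2 * \<eta> * h u \<le> 2 * \<eta> * ((1 - t) * h y + t * h z)"
      unfolding u_def using convex_onD[OF hc, of t y z] t y z \<eta> by simp
    moreover have "u - w = (y - w) + t *\<^sub>R (z - y)" by (simp add: u_def algebra_simps)
    then have "(norm (u - w))\<^sup>2 = (norm (y - w))\<^sup>2 + 2 * t * ((y - w) \<bullet> (z - y)) + t\<^sup>2 * C"
      unfolding C_def by (simp only:) (simp add: power2_norm_add power_mult_distrib)
    moreover have "t\<^sup>2 * C = t * (t * C)" by (simp add: power2_eq_square)
    moreover have "t * A = 2 * \<eta> * h y - 2 * \<eta> * ((1 - t) * h y + t * h z) - 2 * t * ((y - w) \<bullet> (z - y))"
      by (simp add: A_def algebra_simps)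
    ultimately have "t * A \<le> t * (t * C)" by linarith
    then show ?thesis using t by simp
  qed
  have "A \<le> 0"
  proof (rule ccontr)
    assume "\<not> A \<le> 0"
    then have A: "A > 0" by simp
    have C: "C \<ge> 0" by (simp add: C_def)
    define t where "t = A / (A + C + 1)"
    have "0 < t" "t \<le> 1" using A C by (simp_all add: t_def)
    moreover have "t * C < A" using A C by (simp add: t_def field_simps add_pos_pos)
    ultimately show False using segment by fastforce
  qed
  moreover have "(norm (z - w))\<^sup>2 = C + 2 * ((y - w) \<bullet> (z - y)) + (norm (y - w))\<^sup>2"
    using power2_norm_add[of "z - y" "y - w"] by (simp add: C_def inner_commute)
  moreover have "(norm (y - z))\<^sup>2 = C" by (simp add: C_def norm_minus_commute)
  ultimately show ?thesis unfolding A_def by (simp add: algebra_simps)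
qed

lemma lipschitz_gradient_upper_bound:
  fixes g :: "'a::real_inner \<Rightarrow> real" and G :: "'a \<Rightarrow> 'a"
  assumes der: "\<And>x. (g has_derivative (\<lambda>v. G x \<bullet> v)) (at x)"
    and lip: "\<And>x y. norm (G x - G y) \<le> L * norm (x - y)"
  shows "g y \<le> g x + G x \<bullet> (y - x) + L / 2 * (norm (y - x))\<^sup>2"
proof -
  define d where "d = y - x"
  define \<psi> where "\<psi> t = g (x + t *\<^sub>R d) - t * (G x \<bullet> d) - L / 2 * t\<^sup>2 * (norm d)\<^sup>2" for t
  have \<psi>': "(\<psi> has_real_derivative (G (x + t *\<^sub>R d) \<bullet> d - G x \<bullet> d - L * t * (norm d)\<^sup>2)) (at t)"
    for t
  proof -
    have "((\<lambda>t. x + t *\<^sub>R d) has_derivative (\<lambda>s. s *\<^sub>R d)) (at t)"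
      by (auto intro!: derivative_eq_intros)
    from diff_chain_at[OF this der]
    have "((\<lambda>t. g (x + t *\<^sub>R d)) has_derivative (\<lambda>s. G (x + t *\<^sub>R d) \<bullet> (s *\<^sub>R d))) (at t)"
      by (simp add: o_def)
    then have "((\<lambda>t. g (x + t *\<^sub>R d)) has_real_derivative (G (x + t *\<^sub>R d) \<bullet> d)) (at t)"
      unfolding has_field_derivative_def by (rule has_derivative_eq_rhs) (auto simp: fun_eq_iff)
    then show ?thesis unfolding \<psi>_def by (auto intro!: derivative_eq_intros)
  qed
  have "\<psi> 1 \<le> \<psi> 0"
  proof (rule DERIV_nonpos_imp_nonincreasing[of 0 1])
    fix t :: real assume t: "0 \<le> t" "t \<le> 1"
    have "(G (x + t *\<^sub>R d) - G x) \<bullet> d \<le> norm (G (x + t *\<^sub>R d) - G x) * norm d"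
      by (rule norm_cauchy_schwarz)
    also have "\<dots> \<le> L * norm (t *\<^sub>R d) * norm d"
      using lip[of "x + t *\<^sub>R d" x] by (intro mult_right_mono) auto
    also have "\<dots> = L * t * (norm d)\<^sup>2" using t by (simp add: power2_eq_square)
    finally have "G (x + t *\<^sub>R d) \<bullet> d - G x \<bullet> d - L * t * (norm d)\<^sup>2 \<le> 0"
      by (simp add: inner_diff_left)
    then show "\<exists>D. (\<psi> has_real_derivative D) (at t) \<and> D \<le> 0"
      using \<psi>' by blast
  qed simp
  then show ?thesis unfolding \<psi>_def d_def by simp
qed

lemma prox_gradient_step_bound:
  fixes x y yb v g :: "'a::real_inner"
  assumes D: "convex D" and hc: "convex_on D h" and L: "L > 0" and \<eta>: "\<eta> = 1 / (3 * L)"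
    and x: "x \<in> D" and y: "y \<in> D" and yb: "yb \<in> D"
    and min_y: "\<And>u. u \<in> D \<Longrightarrow> h y + (norm (y - (x - \<eta> *\<^sub>R v)))\<^sup>2 / (2 * \<eta>)
                                  \<le> h u + (norm (u - (x - \<eta> *\<^sub>R v)))\<^sup>2 / (2 * \<eta>)"
    and min_yb: "\<And>u. u \<in> D \<Longrightarrow> h yb + (norm (yb - (x - \<eta> *\<^sub>R g)))\<^sup>2 / (2 * \<eta>)
                                   \<le> h u + (norm (u - (x - \<eta> *\<^sub>R g)))\<^sup>2 / (2 * \<eta>)"
    and desc: "fy \<le> fx + g \<bullet> (y - x) + L / 2 * (norm (y - x))\<^sup>2"
  shows "fy + h y \<le> fx + h x - 3 * L / 2 * (norm (yb - x))\<^sup>2 - L * (norm (y - x))\<^sup>2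
                     + (norm (g - v))\<^sup>2 / (6 * L)"
proof -
  have \<eta>0: "\<eta> > 0" using L \<eta> by simp
  define a where "a = y - x"
  define b where "b = yb - x"
  have sq: "(norm (p + \<eta> *\<^sub>R q))\<^sup>2 = (norm p)\<^sup>2 + 2 * \<eta> * (p \<bullet> q) + \<eta>\<^sup>2 * (norm q)\<^sup>2"
    for p q :: 'a
    by (simp add: power2_norm_add power_mult_distrib)
  have "2 * \<eta> * h y + (norm (a + \<eta> *\<^sub>R v))\<^sup>2 + (norm (a - b))\<^sup>2 \<le> 2 * \<eta> * h yb + (norm (b + \<eta> *\<^sub>R v))\<^sup>2"
    using prox_three_point[OF D hc y yb \<eta>0 min_y] by (simp add: a_def b_def algebra_simps)
  moreover have "2 * \<eta> * h yb + (norm (b + \<eta> *\<^sub>R g))\<^sup>2 + (norm b)\<^sup>2 \<le> 2 * \<eta> * h x + \<eta>\<^sup>2 * (norm g)\<^sup>2"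
    using prox_three_point[OF D hc yb x \<eta>0 min_yb] by (simp add: b_def algebra_simps power_mult_distrib)
  moreover have "(a - b) \<bullet> v = a \<bullet> v - b \<bullet> v" by (simp add: inner_diff_left)
  ultimately have three_point:
    "2 * \<eta> * (h y - h x) + (norm a)\<^sup>2 + (norm b)\<^sup>2 + (norm (a - b))\<^sup>2 + 2 * \<eta> * ((a - b) \<bullet> v) + 2 * \<eta> * (b \<bullet> g) \<le> 0"
    unfolding sq by (simp add: algebra_simps)
  have "2 * \<eta> * (fy - fx) \<le> 2 * \<eta> * (a \<bullet> g + L / 2 * (norm a)\<^sup>2)"
    using desc \<eta>0 by (intro mult_left_mono) (auto simp: a_def inner_commute)
  also have "\<dots> = 2 * \<eta> * (a \<bullet> g) + (norm a)\<^sup>2 / 3"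
    using L unfolding \<eta> by (simp add: field_simps)
  finally have descent: "2 * \<eta> * (fy - fx) \<le> 2 * \<eta> * (a \<bullet> g) + (norm a)\<^sup>2 / 3" .
  have "0 \<le> (norm ((a - b) - \<eta> *\<^sub>R (g - v)))\<^sup>2" by simp
  then have young: "2 * \<eta> * ((a - b) \<bullet> (g - v)) \<le> (norm (a - b))\<^sup>2 + \<eta>\<^sup>2 * (norm (g - v))\<^sup>2"
    by (simp add: power2_norm_diff power_mult_distrib)
  have "(a - b) \<bullet> (g - v) = a \<bullet> g - b \<bullet> g - (a - b) \<bullet> v"
    by (simp add: inner_diff inner_commute)
  then have "2 * \<eta> * ((fy + h y) - (fx + h x)) \<le> \<eta>\<^sup>2 * (norm (g - v))\<^sup>2 - 2 / 3 * (norm a)\<^sup>2 - (norm b)\<^sup>2"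
    using three_point descent young by (simp add: algebra_simps)
  then have "(fy + h y) - (fx + h x) \<le> (\<eta>\<^sup>2 * (norm (g - v))\<^sup>2 - 2 / 3 * (norm a)\<^sup>2 - (norm b)\<^sup>2) / (2 * \<eta>)"
    using \<eta>0 by (simp add: pos_le_divide_eq mult.commute)
  also have "\<dots> = (norm (g - v))\<^sup>2 / (6 * L) - L * (norm a)\<^sup>2 - 3 * L / 2 * (norm b)\<^sup>2"
    using L unfolding \<eta> by (simp add: field_simps power2_eq_square)
  finally show ?thesis unfolding a_def b_def by simp
qed


section \<open>Minibatch sampling\<close>

lemma set_pmf_draw_indices:
  assumes "n \<ge> 1"
  shows "set_pmf (draw_indices n b) = {I. set I \<subseteq> {..<n} \<and> length I = b}"
    and "finite (set_pmf (draw_indices n b))"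
proof -
  have "replicate b 0 \<in> {I. set I \<subseteq> {..<n} \<and> length I = b}" using assms by auto
  moreover have "finite {I. set I \<subseteq> {..<n} \<and> length I = b}"
    by (rule finite_lists_length_eq) simp
  ultimately show "set_pmf (draw_indices n b) = {I. set I \<subseteq> {..<n} \<and> length I = b}"
    unfolding draw_indices_def by (subst set_pmf_of_set) auto
  with \<open>finite _\<close> show "finite (set_pmf (draw_indices n b))" by simp
qed

lemma sum_lists_power2_norm_sum_list:
  fixes w :: "nat \<Rightarrow> 'a::real_inner"
  assumes w0: "(\<Sum>i<n. w i) = 0"
  shows "(\<Sum>I | set I \<subseteq> {..<n} \<and> length I = k. (norm (\<Sum>i\<leftarrow>I. w i))\<^sup>2)
         = real k * real n ^ (k - 1) * (\<Sum>i<n. (norm (w i))\<^sup>2)"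
proof (induction k)
  case 0
  then show ?case by simp
next
  case (Suc k)
  define Lk where "Lk = {I. set I \<subseteq> {..<n} \<and> length I = k}"
  define W where "W = (\<Sum>i<n. (norm (w i))\<^sup>2)"
  \<comment> \<open>the cross terms vanish because the w i sum to zero\<close>
  have cons: "(\<Sum>i<n. (norm (w i + s))\<^sup>2) = W + real n * (norm s)\<^sup>2" for s
  proof -
    have "(\<Sum>i<n. (norm (w i + s))\<^sup>2) = W + 2 * ((\<Sum>i<n. w i) \<bullet> s) + real n * (norm s)\<^sup>2"
      by (simp add: power2_norm_add sum.distrib W_def sum_distrib_left inner_sum_left)
    then show ?thesis using w0 by simp
  qed
  have inj: "inj_on (\<lambda>(I, i). i # I) (Lk \<times> {..<n})" by (auto simp: inj_on_def)
  have "(\<Sum>I | set I \<subseteq> {..<n} \<and> length I = Suc k. (norm (\<Sum>i\<leftarrow>I. w i))\<^sup>2)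
      = (\<Sum>I\<in>Lk. \<Sum>i<n. (norm (w i + (\<Sum>j\<leftarrow>I. w j)))\<^sup>2)"
    unfolding lists_length_Suc_eq Lk_def[symmetric]
    by (subst sum.reindex[OF inj]) (simp add: sum.cartesian_product split_def)
  also have "\<dots> = real (card Lk) * W + real n * (\<Sum>I\<in>Lk. (norm (\<Sum>j\<leftarrow>I. w j))\<^sup>2)"
    by (simp add: cons sum.distrib sum_distrib_left)
  also have "\<dots> = real n ^ k * W + real n * (real k * real n ^ (k - 1) * W)"
    using Suc.IH by (simp add: Lk_def W_def card_lists_length_eq)
  also have "\<dots> = real (Suc k) * real n ^ (Suc k - 1) * W"
    by (cases k) (simp_all add: algebra_simps)
  finally show ?case unfolding W_def .
qed

lemma expectation_minibatch_deviation_le: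
  fixes u :: "nat \<Rightarrow> 'a::real_inner"
  assumes n: "n \<ge> 1" and b: "b \<ge> 1"
  shows "measure_pmf.expectation (draw_indices n b)
           (\<lambda>I. (norm ((1 / real b) *\<^sub>R (\<Sum>i\<leftarrow>I. u i) - (1 / real n) *\<^sub>R (\<Sum>i<n. u i)))\<^sup>2)
         \<le> (\<Sum>i<n. (norm (u i))\<^sup>2) / (real n * real b)"
proof -
  define \<mu> where "\<mu> = (1 / real n) *\<^sub>R (\<Sum>i<n. u i)"
  define w where "w i = u i - \<mu>" for i
  define Lb where "Lb = {I. set I \<subseteq> {..<n} \<and> length I = b}"
  have Lb: "Lb \<noteq> {}" "finite Lb"
    using set_pmf_draw_indices[OF n, of b] set_pmf_not_empty[of "draw_indices n b"]
    by (simp_all add: Lb_def)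
  have sum_u: "(\<Sum>i<n. u i) = real n *\<^sub>R \<mu>" using n by (simp add: \<mu>_def)
  have "(\<Sum>i<n. w i) = 0" by (simp add: w_def sum_subtractf sum_u sum_constant_scaleR)
  note sum_w = sum_lists_power2_norm_sum_list[OF this, of b, folded Lb_def]
  have centered: "(norm ((1 / real b) *\<^sub>R (\<Sum>i\<leftarrow>I. u i) - \<mu>))\<^sup>2 = (norm (\<Sum>i\<leftarrow>I. w i))\<^sup>2 / (real b)\<^sup>2"
    if "I \<in> Lb" for I
  proof -
    have "(\<Sum>i\<leftarrow>I. u i) = (\<Sum>i\<leftarrow>I. w i) + real b *\<^sub>R \<mu>"
      using that unfolding w_def Lb_def by (induction I arbitrary: b) (auto simp: algebra_simps)
    then have "(1 / real b) *\<^sub>R (\<Sum>i\<leftarrow>I. u i) - \<mu> = (1 / real b) *\<^sub>R (\<Sum>i\<leftarrow>I. w i)"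
      using b by (simp add: scaleR_add_right)
    then show ?thesis by (simp add: power_divide power_mult_distrib)
  qed
  have "measure_pmf.expectation (draw_indices n b)
           (\<lambda>I. (norm ((1 / real b) *\<^sub>R (\<Sum>i\<leftarrow>I. u i) - \<mu>))\<^sup>2)
       = (\<Sum>I\<in>Lb. (norm ((1 / real b) *\<^sub>R (\<Sum>i\<leftarrow>I. u i) - \<mu>))\<^sup>2) / real (card Lb)"
    unfolding draw_indices_def Lb_def[symmetric] using Lb by (rule integral_pmf_of_set)
  also have "\<dots> = (\<Sum>I\<in>Lb. (norm (\<Sum>i\<leftarrow>I. w i))\<^sup>2) / (real b)\<^sup>2 / real n ^ b"
    by (simp add: centered Lb_def card_lists_length_eq sum_divide_distrib)
  also have "\<dots> = (\<Sum>i<n. (norm (w i))\<^sup>2) / (real n * real b)"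
  proof -
    have "real n ^ b = real n * real n ^ (b - 1)" using b by (simp add: power_eq_if)
    then show ?thesis unfolding sum_w using n b by (simp add: power2_eq_square field_simps)
  qed
  also have "\<dots> \<le> (\<Sum>i<n. (norm (u i))\<^sup>2) / (real n * real b)"
  proof -
    have "(\<Sum>i<n. (norm (w i))\<^sup>2) = (\<Sum>i<n. (norm (u i))\<^sup>2) - 2 * ((\<Sum>i<n. u i) \<bullet> \<mu>) + real n * (norm \<mu>)\<^sup>2"
      by (simp add: w_def power2_norm_diff sum.distrib sum_subtractf inner_sum_left sum_distrib_left)
    also have "\<dots> = (\<Sum>i<n. (norm (u i))\<^sup>2) - real n * (norm \<mu>)\<^sup>2"
      by (simp add: sum_u power2_norm_eq_inner)
    finally have "(\<Sum>i<n. (norm (w i))\<^sup>2) \<le> (\<Sum>i<n. (norm (u i))\<^sup>2)" by simp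
    then show ?thesis by (intro divide_right_mono) auto
  qed
  finally show ?thesis unfolding \<mu>_def .
qed


section \<open>Expectations under finitely supported distributions\<close>

lemma pmf_expectation_cong:
  fixes f g :: "'a \<Rightarrow> real"
  assumes "\<And>x. x \<in> set_pmf p \<Longrightarrow> f x = g x"
  shows "measure_pmf.expectation p f = measure_pmf.expectation p g"
  by (rule integral_cong_AE) (auto simp: AE_measure_pmf_iff assms)

lemma pmf_expectation_add:
  fixes f g :: "'a \<Rightarrow> real"
  assumes "finite (set_pmf p)"
  shows "measure_pmf.expectation p (\<lambda>x. f x + g x)
         = measure_pmf.expectation p f + measure_pmf.expectation p g"
  by (rule Bochner_Integration.integral_add) (auto intro: integrable_measure_pmf_finite[OF assms])

lemma pmf_expectation_mono:
  fixes f g :: "'a \<Rightarrow> real"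
  assumes "finite (set_pmf p)" "\<And>x. x \<in> set_pmf p \<Longrightarrow> f x \<le> g x"
  shows "measure_pmf.expectation p f \<le> measure_pmf.expectation p g"
  by (rule integral_mono_AE)
    (auto intro: integrable_measure_pmf_finite[OF assms(1)] simp: AE_measure_pmf_iff assms(2))

lemma pmf_expectation_bind_finite:
  fixes g :: "'b \<Rightarrow> real"
  assumes "finite (set_pmf p)" "\<And>x. x \<in> set_pmf p \<Longrightarrow> finite (set_pmf (f x))"
  shows "measure_pmf.expectation (bind_pmf p f) g
         = measure_pmf.expectation p (\<lambda>x. measure_pmf.expectation (f x) g)"
proof -
  have "measure_pmf.expectation (bind_pmf p f) g
        = (\<Sum>a\<in>set_pmf p. pmf p a *\<^sub>R measure_pmf.expectation (f a) g)"
    by (rule pmf_expectation_bind) (use assms in auto)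
  also have "\<dots> = measure_pmf.expectation p (\<lambda>x. measure_pmf.expectation (f x) g)"
    by (rule integral_measure_pmf[OF assms(1), symmetric]) auto
  finally show ?thesis .
qed


section \<open>The ProxSVRG iteration\<close>

locale prox_svrg_setting =
  fixes n :: nat and fs :: "nat \<Rightarrow> 'a::euclidean_space \<Rightarrow> real"
    and gf :: "nat \<Rightarrow> 'a \<Rightarrow> 'a" and L :: real
    and D :: "'a set" and h :: "'a \<Rightarrow> real" and b m :: nat and \<eta> :: real
  assumes n_pos: "n \<ge> 1"
    and grad: "\<And>i x. i < n \<Longrightarrow> (fs i has_derivative (\<lambda>v. gf i x \<bullet> v)) (at x)"
    and L_pos: "L > 0"
    and smooth: "\<And>i x y. i < n \<Longrightarrow> norm (gf i x - gf i y) \<le> L * norm (x - y)"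
    and D_ne: "D \<noteq> {}" and D_convex: "convex D"
    and h_convex: "convex_on D h" and h_lsc: "lsc_ext D h"
    and \<eta>_def: "\<eta> = 1 / (3 * L)"
    and b_pos: "b \<ge> 1" and m_pos: "m \<ge> 1" and m_sq_le_b: "real m ^ 2 \<le> real b"
begin

definition f :: "'a \<Rightarrow> real" where "f x = (\<Sum>i<n. fs i x) / real n"

definition F :: "'a \<Rightarrow> real" where "F x = f x + h x"

definition stationarity :: "'a \<Rightarrow> real" where
  "stationarity x = (norm (grad_map \<eta> D h n gf x))\<^sup>2 / (18 * L)"

lemma \<eta>_pos: "\<eta> > 0"
  using \<eta>_def L_pos by simp

lemma prox_in: "prox \<eta> D h w \<in> D"
  using prox_in_domain[OF D_convex D_ne h_convex h_lsc \<eta>_pos] .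

lemma prox_min:
  "z \<in> D \<Longrightarrow> h (prox \<eta> D h w) + (norm (prox \<eta> D h w - w))\<^sup>2 / (2 * \<eta>)
              \<le> h z + (norm (z - w))\<^sup>2 / (2 * \<eta>)"
  using prox_minimal[OF D_convex D_ne h_convex h_lsc \<eta>_pos] .

lemma f_upper_bound:
  "f y \<le> f x + full_grad n gf x \<bullet> (y - x) + L / 2 * (norm (y - x))\<^sup>2"
proof -
  have "(\<Sum>i<n. fs i y) \<le> (\<Sum>i<n. fs i x + gf i x \<bullet> (y - x) + L / 2 * (norm (y - x))\<^sup>2)"
    by (intro sum_mono lipschitz_gradient_upper_bound[OF grad smooth]) auto
  also have "\<dots> = (\<Sum>i<n. fs i x) + (\<Sum>i<n. gf i x) \<bullet> (y - x) + real n * (L / 2 * (norm (y - x))\<^sup>2)"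
    by (simp add: sum.distrib inner_sum_left)
  finally have "(\<Sum>i<n. fs i y) / real n
      \<le> ((\<Sum>i<n. fs i x) + (\<Sum>i<n. gf i x) \<bullet> (y - x) + real n * (L / 2 * (norm (y - x))\<^sup>2)) / real n"
    using n_pos by (intro divide_right_mono) auto
  then show ?thesis using n_pos by (simp add: f_def full_grad_def add_divide_distrib)
qed

lemma stationarity_eq:
  "stationarity x = L / 2 * (norm (prox \<eta> D h (x - \<eta> *\<^sub>R full_grad n gf x) - x))\<^sup>2"
proof -
  have "norm (grad_map \<eta> D h n gf x) = 3 * L * norm (prox \<eta> D h (x - \<eta> *\<^sub>R full_grad n gf x) - x)"
    using L_pos by (simp add: grad_map_def \<eta>_def norm_minus_commute)
  then show ?thesis
    unfolding stationarity_def using L_pos by (simp add: power_mult_distrib power2_eq_square)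
qed

lemma svrg_step_support:
  shows "set_pmf (svrg_step n b \<eta> D h gf xt g x) \<subseteq> D"
    and "finite (set_pmf (svrg_step n b \<eta> D h gf xt g x))"
  unfolding svrg_step_def using prox_in set_pmf_draw_indices[OF n_pos] by (auto simp: Let_def)

lemma expectation_minibatch_gradient_error:
  "measure_pmf.expectation (draw_indices n b)
     (\<lambda>I. (norm (full_grad n gf x - ((1 / real b) *\<^sub>R (\<Sum>i\<leftarrow>I. gf i x - gf i xt) + full_grad n gf xt)))\<^sup>2)
   \<le> L\<^sup>2 * (norm (x - xt))\<^sup>2 / real b"
proof -
  define u where "u i = gf i x - gf i xt" for i
  have "full_grad n gf x - ((1 / real b) *\<^sub>R (\<Sum>i\<leftarrow>I. gf i x - gf i xt) + full_grad n gf xt)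
      = - ((1 / real b) *\<^sub>R (\<Sum>i\<leftarrow>I. u i) - (1 / real n) *\<^sub>R (\<Sum>i<n. u i))" for I
    by (simp add: u_def full_grad_def sum_subtractf scaleR_diff_right algebra_simps)
  then have "measure_pmf.expectation (draw_indices n b)
     (\<lambda>I. (norm (full_grad n gf x - ((1 / real b) *\<^sub>R (\<Sum>i\<leftarrow>I. gf i x - gf i xt) + full_grad n gf xt)))\<^sup>2)
     \<le> (\<Sum>i<n. (norm (u i))\<^sup>2) / (real n * real b)"
    using expectation_minibatch_deviation_le[OF n_pos b_pos, of u] by (simp only: norm_minus_cancel)
  also have "\<dots> \<le> (\<Sum>i<n. L\<^sup>2 * (norm (x - xt))\<^sup>2) / (real n * real b)"
  proof -
    have "(norm (u i))\<^sup>2 \<le> L\<^sup>2 * (norm (x - xt))\<^sup>2" if "i < n" for i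
      using power_mono[OF smooth[OF that, of x xt]] by (simp add: u_def power_mult_distrib)
    then show ?thesis by (intro divide_right_mono sum_mono) auto
  qed
  also have "\<dots> = L\<^sup>2 * (norm (x - xt))\<^sup>2 / real b" using n_pos by simp
  finally show ?thesis .
qed

lemma svrg_step_bound:
  fixes v :: 'a
  assumes x: "x \<in> D" and c: "c \<ge> 0" "c * (1 + real m) \<le> L"
  defines "y \<equiv> prox \<eta> D h (x - \<eta> *\<^sub>R v)"
  shows "F y + c * (norm (y - xt))\<^sup>2
         \<le> F x - stationarity x + c * (1 + 1 / real m) * (norm (x - xt))\<^sup>2
            + (norm (full_grad n gf x - v))\<^sup>2 / (6 * L)"
proof -
  define yb where "yb = prox \<eta> D h (x - \<eta> *\<^sub>R full_grad n gf x)"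
  have "f y + h y \<le> f x + h x - 3 * L / 2 * (norm (yb - x))\<^sup>2 - L * (norm (y - x))\<^sup>2
                     + (norm (full_grad n gf x - v))\<^sup>2 / (6 * L)"
    unfolding y_def yb_def
    by (rule prox_gradient_step_bound[OF D_convex h_convex L_pos \<eta>_def x prox_in prox_in
          prox_min prox_min f_upper_bound])
  moreover have "c * (norm (y - xt))\<^sup>2
                 \<le> c * ((1 + real m) * (norm (y - x))\<^sup>2 + (1 + 1 / real m) * (norm (x - xt))\<^sup>2)"
    using power2_norm_add_le_weighted[of "real m" "y - x" "x - xt"] m_pos c(1)
    by (intro mult_left_mono) auto
  moreover have "c * (1 + real m) * (norm (y - x))\<^sup>2 \<le> L * (norm (y - x))\<^sup>2"
    using c(2) by (rule mult_right_mono) simp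
  moreover have "stationarity x = L / 2 * (norm (yb - x))\<^sup>2"
    unfolding yb_def by (rule stationarity_eq)
  moreover have "0 \<le> L * (norm (yb - x))\<^sup>2" using L_pos by simp
  ultimately show ?thesis unfolding F_def by (simp add: algebra_simps)
qed

lemma expectation_svrg_step_le:
  assumes x: "x \<in> D" and c: "c \<ge> 0" "c * (1 + real m) \<le> L"
  shows "measure_pmf.expectation (svrg_step n b \<eta> D h gf xt (full_grad n gf xt) x)
           (\<lambda>y. F y + c * (norm (y - xt))\<^sup>2)
         \<le> F x - stationarity x + (c * (1 + 1 / real m) + L / (6 * real b)) * (norm (x - xt))\<^sup>2"
proof -
  define v where "v I = (1 / real b) *\<^sub>R (\<Sum>i\<leftarrow>I. gf i x - gf i xt) + full_grad n gf xt" for I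
  define K where "K = F x - stationarity x + c * (1 + 1 / real m) * (norm (x - xt))\<^sup>2"
  note finite_draw = set_pmf_draw_indices(2)[OF n_pos]
  have "measure_pmf.expectation (svrg_step n b \<eta> D h gf xt (full_grad n gf xt) x)
          (\<lambda>y. F y + c * (norm (y - xt))\<^sup>2)
      = measure_pmf.expectation (draw_indices n b)
          (\<lambda>I. F (prox \<eta> D h (x - \<eta> *\<^sub>R v I)) + c * (norm (prox \<eta> D h (x - \<eta> *\<^sub>R v I) - xt))\<^sup>2)"
    unfolding svrg_step_def v_def by (simp add: Let_def)
  also have "\<dots> \<le> measure_pmf.expectation (draw_indices n b)
                   (\<lambda>I. K + (norm (full_grad n gf x - v I))\<^sup>2 / (6 * L))"
    unfolding K_def using finite_draw svrg_step_bound[OF x c] by (intro pmf_expectation_mono)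
  also have "\<dots> = K + measure_pmf.expectation (draw_indices n b)
                       (\<lambda>I. (norm (full_grad n gf x - v I))\<^sup>2) / (6 * L)"
    using finite_draw by (simp add: pmf_expectation_add)
  also have "\<dots> \<le> K + L\<^sup>2 * (norm (x - xt))\<^sup>2 / real b / (6 * L)"
    using expectation_minibatch_gradient_error[of x xt] L_pos unfolding v_def
    by (intro add_left_mono divide_right_mono) auto
  also have "\<dots> = F x - stationarity x + (c * (1 + 1 / real m) + L / (6 * real b)) * (norm (x - xt))\<^sup>2"
    unfolding K_def using L_pos b_pos by (simp add: field_simps power2_eq_square)
  finally show ?thesis .
qed

text \<open>\<open>lyap_coeff k\<close> is the paper's weight \<open>c\<^sub>m\<^sub>-\<^sub>k\<close> of \<open>\<parallel>x - s\<parallel>\<^sup>2\<close> in the Lyapunov function when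
  \<open>k\<close> inner steps remain: it solves \<open>c\<^sub>t = c\<^sub>t\<^sub>+\<^sub>1 (1 + 1/m) + L/(6b)\<close>, \<open>c\<^sub>m = 0\<close>.\<close>
definition lyap_coeff :: "nat \<Rightarrow> real" where
  "lyap_coeff k = L * real m / (6 * real b) * ((1 + 1 / real m) ^ k - 1)"

lemma lyap_coeff_0: "lyap_coeff 0 = 0"
  by (simp add: lyap_coeff_def)

lemma lyap_coeff_Suc: "lyap_coeff (Suc k) = lyap_coeff k * (1 + 1 / real m) + L / (6 * real b)"
  using m_pos b_pos by (simp add: lyap_coeff_def field_simps)

lemma lyap_coeff_nonneg: "lyap_coeff k \<ge> 0"
  using L_pos by (simp add: lyap_coeff_def one_le_power)

lemma lyap_coeff_le:
  assumes "k \<le> m"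
  shows "lyap_coeff k * (1 + real m) \<le> L"
proof -
  have "(1 + 1 / real m) ^ k \<le> (1 + 1 / real m) ^ m" using assms by (intro power_increasing) auto
  also have "\<dots> \<le> exp 1"
    using exp_ge_one_plus_x_over_n_power_n[of m 1] m_pos by simp
  also have "\<dots> \<le> 3" by (rule exp_le)
  finally have "lyap_coeff k \<le> L * real m / (6 * real b) * 2"
    using L_pos unfolding lyap_coeff_def by (intro mult_left_mono) auto
  then have "lyap_coeff k * (1 + real m) \<le> L * real m / (6 * real b) * 2 * (1 + real m)"
    by (rule mult_right_mono) simp
  also have "\<dots> = L * (real m * (1 + real m)) / (3 * real b)" by (simp add: field_simps)
  also have "\<dots> \<le> L"
  proof -
    have "real m \<le> real m ^ 2" using m_pos by (simp add: power2_eq_square)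
    then have "real m * (1 + real m) \<le> 3 * real b"
      using m_sq_le_b of_nat_0_le_iff[of b] by (simp add: power2_eq_square algebra_simps)
    then have "L * (real m * (1 + real m)) \<le> L * (3 * real b)"
      using L_pos by (intro mult_left_mono) auto
    then show ?thesis using b_pos by (simp add: field_simps)
  qed
  finally show ?thesis .
qed

lemma length_svrg_inner:
  "xs \<in> set_pmf (svrg_inner n b \<eta> D h gf xt g k x) \<Longrightarrow> length xs = Suc k"
  by (induction k arbitrary: x xs) auto

lemma set_svrg_inner_subset:
  "x \<in> D \<Longrightarrow> xs \<in> set_pmf (svrg_inner n b \<eta> D h gf xt g k x) \<Longrightarrow> set xs \<subseteq> D"
  by (induction k arbitrary: x xs) (use svrg_step_support(1) in fastforce)+

lemma finite_svrg_inner: "finite (set_pmf (svrg_inner n b \<eta> D h gf xt g k x))"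
  by (induction k arbitrary: x) (auto simp: svrg_step_support(2))

lemma expectation_svrg_inner_Suc:
  fixes \<Phi> \<Psi> :: "'a \<Rightarrow> real"
  defines "V \<equiv> \<lambda>xs. sum_list (map \<Phi> (butlast xs)) + \<Psi> (last xs)"
  shows "measure_pmf.expectation (svrg_inner n b \<eta> D h gf xt g (Suc k) x) V
         = \<Phi> x + measure_pmf.expectation (svrg_step n b \<eta> D h gf xt g x)
                    (\<lambda>y. measure_pmf.expectation (svrg_inner n b \<eta> D h gf xt g k y) V)"
proof -
  let ?step = "svrg_step n b \<eta> D h gf xt g x"
  let ?inner = "svrg_inner n b \<eta> D h gf xt g k"
  have cons: "V (x # xs) = \<Phi> x + V xs" if "xs \<in> set_pmf (?inner y)" for xs y
    using length_svrg_inner[OF that] by (cases xs) (auto simp: V_def)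
  have "measure_pmf.expectation (svrg_inner n b \<eta> D h gf xt g (Suc k) x) V
        = measure_pmf.expectation ?step (\<lambda>y. measure_pmf.expectation (?inner y) (\<lambda>xs. V (x # xs)))"
    by (simp add: pmf_expectation_bind_finite svrg_step_support(2) finite_svrg_inner)
  also have "\<dots> = measure_pmf.expectation ?step (\<lambda>y. \<Phi> x + measure_pmf.expectation (?inner y) V)"
    by (intro pmf_expectation_cong)
      (simp add: pmf_expectation_cong[OF cons] pmf_expectation_add finite_svrg_inner)
  also have "\<dots> = \<Phi> x + measure_pmf.expectation ?step (\<lambda>y. measure_pmf.expectation (?inner y) V)"
    by (simp add: pmf_expectation_add svrg_step_support(2))
  finally show ?thesis .
qed

lemma expectation_svrg_inner_le:
  assumes "x \<in> D" "k \<le> m"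
  shows "measure_pmf.expectation (svrg_inner n b \<eta> D h gf xt (full_grad n gf xt) k x)
           (\<lambda>xs. sum_list (map stationarity (butlast xs)) + F (last xs))
         \<le> F x + lyap_coeff k * (norm (x - xt))\<^sup>2"
  using assms
proof (induction k arbitrary: x)
  case 0
  then show ?case by (simp add: lyap_coeff_0)
next
  case (Suc k)
  let ?step = "svrg_step n b \<eta> D h gf xt (full_grad n gf xt) x"
  let ?V = "\<lambda>xs. sum_list (map stationarity (butlast xs)) + F (last xs)"
  have "measure_pmf.expectation (svrg_inner n b \<eta> D h gf xt (full_grad n gf xt) (Suc k) x) ?V
        = stationarity x + measure_pmf.expectation ?step
            (\<lambda>y. measure_pmf.expectation (svrg_inner n b \<eta> D h gf xt (full_grad n gf xt) k y) ?V)"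
    by (rule expectation_svrg_inner_Suc)
  also have "\<dots> \<le> stationarity x + measure_pmf.expectation ?step
                                     (\<lambda>y. F y + lyap_coeff k * (norm (y - xt))\<^sup>2)"
    using Suc svrg_step_support
    by (intro add_left_mono pmf_expectation_mono) (auto simp: subset_iff)
  also have "\<dots> \<le> F x + (lyap_coeff k * (1 + 1 / real m) + L / (6 * real b)) * (norm (x - xt))\<^sup>2"
    using expectation_svrg_step_le[OF Suc.prems(1) lyap_coeff_nonneg lyap_coeff_le, of k xt]
      Suc.prems(2) by simp
  finally show ?case by (simp add: lyap_coeff_Suc)
qed

lemma length_svrg_outer:
  "xs \<in> set_pmf (svrg_outer n b \<eta> D h gf m S x) \<Longrightarrow> length xs = S * m"
  by (induction S arbitrary: x xs) (auto dest: length_svrg_inner)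

lemma finite_svrg_outer: "finite (set_pmf (svrg_outer n b \<eta> D h gf m S x))"
  by (induction S arbitrary: x) (auto simp: finite_svrg_inner)

lemma expectation_svrg_outer_le:
  assumes "x \<in> D" and F_min: "\<And>y. y \<in> D \<Longrightarrow> Fmin \<le> F y"
  shows "measure_pmf.expectation (svrg_outer n b \<eta> D h gf m S x) (\<lambda>xs. sum_list (map stationarity xs))
         \<le> F x - Fmin"
  using assms(1)
proof (induction S arbitrary: x)
  case 0
  then show ?case using F_min by simp
next
  case (Suc S)
  let ?inner = "svrg_inner n b \<eta> D h gf x (full_grad n gf x) m x"
  let ?outer = "\<lambda>y. svrg_outer n b \<eta> D h gf m S y"
  let ?V = "\<lambda>xs. sum_list (map stationarity xs)"
  have last_in_D: "last xs \<in> D" if "xs \<in> set_pmf ?inner" for xs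
    using length_svrg_inner[OF that] set_svrg_inner_subset[OF Suc.prems that]
    by (metis last_in_set list.size(3) nat.distinct(1) subsetD)
  have "measure_pmf.expectation (svrg_outer n b \<eta> D h gf m (Suc S) x) ?V
        = measure_pmf.expectation ?inner
            (\<lambda>xs. ?V (butlast xs) + measure_pmf.expectation (?outer (last xs)) ?V)"
    by (simp add: pmf_expectation_bind_finite finite_svrg_inner finite_svrg_outer
        pmf_expectation_add)
  also have "\<dots> \<le> measure_pmf.expectation ?inner (\<lambda>xs. (?V (butlast xs) + F (last xs)) + - Fmin)"
    using Suc.IH last_in_D by (intro pmf_expectation_mono finite_svrg_inner) fastforce
  also have "\<dots> = measure_pmf.expectation ?inner (\<lambda>xs. ?V (butlast xs) + F (last xs)) - Fmin"
    by (subst pmf_expectation_add) (simp_all add: finite_svrg_inner)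
  also have "\<dots> \<le> F x - Fmin"
    using expectation_svrg_inner_le[OF Suc.prems order_refl, of x] by simp
  finally show ?case .
qed

lemma expectation_prox_svrg_le:
  assumes x0: "x0 \<in> D" and T: "T = S * m" "T > 0" and F_min: "\<And>y. y \<in> D \<Longrightarrow> Fmin \<le> F y"
  shows "measure_pmf.expectation (prox_svrg n D h gf x0 T m b \<eta>) (\<lambda>x. (norm (grad_map \<eta> D h n gf x))\<^sup>2)
         \<le> 18 * L * (F x0 - Fmin) / real T"
proof -
  let ?outer = "svrg_outer n b \<eta> D h gf m S x0"
  have S: "nat \<lceil>real T / real m\<rceil> = S" using T m_pos by simp
  have "measure_pmf.expectation (prox_svrg n D h gf x0 T m b \<eta>) (\<lambda>x. (norm (grad_map \<eta> D h n gf x))\<^sup>2)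
        = measure_pmf.expectation ?outer
            (\<lambda>xs. measure_pmf.expectation (pmf_of_set {..<T}) (\<lambda>j. (norm (grad_map \<eta> D h n gf (xs ! j)))\<^sup>2))"
    unfolding prox_svrg_def Let_def S T(1)[symmetric]
    by (subst pmf_expectation_bind_finite) (use T(2) in \<open>auto simp: finite_svrg_outer lessThan_empty_iff\<close>)
  also have "\<dots> = measure_pmf.expectation ?outer (\<lambda>xs. 18 * L / real T * sum_list (map stationarity xs))"
  proof (rule pmf_expectation_cong)
    fix xs assume "xs \<in> set_pmf ?outer"
    then have "length xs = T" using T length_svrg_outer by simp
    then show "measure_pmf.expectation (pmf_of_set {..<T}) (\<lambda>j. (norm (grad_map \<eta> D h n gf (xs ! j)))\<^sup>2)
               = 18 * L / real T * sum_list (map stationarity xs)"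
      using T(2) L_pos
      by (simp add: integral_pmf_of_set lessThan_empty_iff stationarity_def sum_list_sum_nth
          atLeast0LessThan sum_distrib_left sum_divide_distrib)
  qed
  also have "\<dots> = 18 * L / real T * measure_pmf.expectation ?outer (\<lambda>xs. sum_list (map stationarity xs))"
    by simp
  also have "\<dots> \<le> 18 * L / real T * (F x0 - Fmin)"
    using expectation_svrg_outer_le[OF x0 F_min] L_pos by (intro mult_left_mono) auto
  finally show ?thesis by simp
qed

end


lemma prox_svrg_parameters:
  assumes n: "n \<ge> 1" and b: "real b = real n powr (2/3)" and m: "m = nat \<lfloor>real n powr (1/3)\<rfloor>"
  shows "m \<ge> 1" and "b \<ge> 1" and "real m ^ 2 \<le> real b"
proof -
  define r where "r = real n powr (1/3)"
  have r: "r \<ge> 1" unfolding r_def using n by (intro ge_one_powr_ge_zero) auto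
  have "r ^ 2 = real b"
    unfolding r_def b by (simp add: power2_eq_square powr_add[symmetric])
  moreover have m_r: "real m \<le> r" "m \<ge> 1" unfolding m r_def[symmetric] using r by (simp_all add: le_nat_floor)
  moreover have "real m ^ 2 \<le> r ^ 2" using m_r by (intro power_mono) auto
  ultimately show "m \<ge> 1" and m_b: "real m ^ 2 \<le> real b" by simp_all
  have "1 \<le> real m ^ 2" using m_r by simp
  with m_b show "b \<ge> 1" by linarith
qed

theorem theorem2:
  fixes n :: nat and fs :: "nat \<Rightarrow> 'a::euclidean_space \<Rightarrow> real"
    and gf :: "nat \<Rightarrow> 'a \<Rightarrow> 'a" and L :: real
    and D :: "'a set" and h :: "'a \<Rightarrow> real"
    and xstar x0 :: 'a and T m b :: nat and \<eta> :: real
  assumes n_pos: "n \<ge> 1"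
    and grad: "\<And>i x. i < n \<Longrightarrow> (fs i has_derivative (\<lambda>v. gf i x \<bullet> v)) (at x)"
    and L_pos: "L > 0"
    and smooth: "\<And>i x y. i < n \<Longrightarrow> norm (gf i x - gf i y) \<le> L * norm (x - y)"
    and D_ne: "D \<noteq> {}" and D_closed: "closed D"
    and h_convex: "convex_on D h" and D_convex: "convex D"
    and h_lsc: "lsc_ext D h"
    and xstar_min: "xstar \<in> D"
      "\<And>y. y \<in> D \<Longrightarrow> (\<Sum>i<n. fs i xstar) / real n + h xstar \<le> (\<Sum>i<n. fs i y) / real n + h y"
    and b_def: "real b = real n powr (2/3)"
    and \<eta>_def: "\<eta> = 1 / (3 * L)"
    and m_def: "m = nat \<lfloor>real n powr (1/3)\<rfloor>"
    and T_pos: "T > 0" and T_mult: "m dvd T"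
  shows "ereal (measure_pmf.expectation (prox_svrg n D h gf x0 T m b \<eta>)
                  (\<lambda>x. (norm (grad_map \<eta> D h n gf x))\<^sup>2))
         \<le> ereal (18 * L) * (F_ext D (\<lambda>x. (\<Sum>i<n. fs i x) / real n) h x0
                             - ereal ((\<Sum>i<n. fs i xstar) / real n + h xstar)) / ereal (real T)"
proof (cases "x0 \<in> D")
  case False
  then show ?thesis using L_pos T_pos by (simp add: F_ext_def divide_ereal_def)
next
  case True
  note params = prox_svrg_parameters[OF n_pos b_def m_def]
  interpret prox_svrg_setting n fs gf L D h b m \<eta>
    by unfold_locales (use assms params in auto)
  obtain S where "T = S * m" using T_mult by (metis dvdE mult.commute)
  from expectation_prox_svrg_le[OF True this T_pos, of "F xstar"]
  have "measure_pmf.expectation (prox_svrg n D h gf x0 T m b \<eta>) (\<lambda>x. (norm (grad_map \<eta> D h n gf x))\<^sup>2)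
        \<le> 18 * L * (F x0 - F xstar) / real T"
    using xstar_min(2) by (simp add: F_def f_def)
  moreover have "F_ext D (\<lambda>x. (\<Sum>i<n. fs i x) / real n) h x0 = ereal (F x0)"
    using True by (simp add: F_ext_def F_def f_def)
  ultimately show ?thesis
    using T_pos by (simp add: F_def f_def divide_ereal_def divide_inverse)
qed

end
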